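(* Let $2\leq d\leq k$ be integers, $\Sigma_k=\{\sigma_1,\ldots,\sigma_k\}$, $\Sigma_d=\{\sigma_1,\ldots,\sigma_d\}$, $n\geq 1$, and let $\mathcal{G}\subseteq\Sigma_k^n$. Put $\mathcal{G}'=\mathcal{G}\cap\Sigma_d^n$. Suppose $\mathcal{G}$ is closed under replacing $\sigma_i$ by $\sigma_j$ for any $i>d$ and $j\in[k]$, i.e. whenever $g\in\mathcal{G}$ has the letter $\sigma_i$ with $i>d$ in some coordinate, the word obtained from $g$ by changing that coordinate to any letter $\sigma_j$, $j\in[k]$, also lies in $\mathcal{G}$. Then either $|\mathcal{G}|=|\mathcal{G}'|=0$ or $\log_k|\mathcal{G}|\leq\log_d|\mathcal{G}'|$. *)

theory Defs
  imports "HOL-Analysis.Analysis"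
begin

text \<open>Letters: sigma_i is represented by the natural number i, so Sigma_k = {1..k}.
  Words of length n over Sigma_k: extensional functions on {..<n}.\<close>

definition words :: "nat \<Rightarrow> nat \<Rightarrow> (nat \<Rightarrow> nat) set" where
  "words k n = PiE {..<n} (\<lambda>_. {1..k})"

end

theory Submission
  imports Defs
begin

text \<open>Put \<open>a = log d k \<ge> 1\<close>, so that \<open>d powr a = k\<close>; we show \<open>|G| \<le> |G'| powr a\<close> by
  induction on the number of coordinates. Splitting \<open>G\<close> according to the letter in one
  coordinate gives slices \<open>G\<^sub>1, \<dots>, G\<^sub>k\<close>; the closure hypothesis makes every slice for a
  letter \<open>b > d\<close> contained in every other slice, so all of them are bounded by the smallest
  one, \<open>G\<^sub>d\<^sub>+\<^sub>1\<close>. With \<open>x\<^sub>b = |G\<^sub>b'|\<close> and \<open>m = x\<^sub>d\<^sub>+\<^sub>1 \<le> x\<^sub>b\<close> the induction hypothesis yields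
  \<open>|G| \<le> \<Sum>\<^sub>b\<^sub>\<le>\<^sub>d x\<^sub>b powr a + (k - d) m powr a\<close>, and convexity of \<open>t \<mapsto> t powr a\<close> (its increments
  grow with the base point) bounds this by \<open>(\<Sum>\<^sub>b\<^sub>\<le>\<^sub>d x\<^sub>b) powr a = |G'| powr a\<close>.\<close>

lemma powr_mult_le_of_le_one:
  fixes s x p :: real
  assumes "0 \<le> s" "s \<le> 1" "0 \<le> x" "1 \<le> p"
  shows "(s * x) powr p \<le> s * x powr p"
proof -
  have "s powr p \<le> s powr 1"
    using assms by (intro powr_mono') auto
  then have "s powr p * x powr p \<le> s * x powr p"
    using assms by (auto intro: mult_right_mono)
  then show ?thesis
    using assms by (simp add: powr_mult)
qed

lemma powr_convex_nonneg:
  fixes p :: real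
  assumes "1 \<le> p"
  shows "convex_on {0..} (\<lambda>x. x powr p)"
proof (rule convex_onI)
  fix t x y :: real
  assume t: "0 < t" "t < 1" and x: "x \<in> {0..}" and y: "y \<in> {0..}"
  consider "x = 0" | "y = 0" | "x > 0" "y > 0"
    using x y by fastforce
  then show "((1 - t) *\<^sub>R x + t *\<^sub>R y) powr p \<le> (1 - t) * x powr p + t * y powr p"
  proof cases
    case 1
    then show ?thesis using powr_mult_le_of_le_one[of t y p] t y assms by simp
  next
    case 2
    then show ?thesis using powr_mult_le_of_le_one[of "1 - t" x p] t x assms by simp
  next
    case 3
    then show ?thesis using convex_onD[OF powr_convex[OF assms], of t x y] t by simp
  qed
qed simp

lemma convex_on_increment_le:
  fixes f :: "real \<Rightarrow> real"
  assumes f: "convex_on {x..y + t} f" and "x \<le> y" "0 \<le> t"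
  shows "f (x + t) - f x \<le> f (y + t) - f y"
proof (cases "y + t = x")
  case True
  then have "y = x" "t = 0" using assms by auto
  then show ?thesis by simp
next
  case False
  define slope where "slope = (f (y + t) - f x) / (y + t - x)"
  have "f (x + t) \<le> slope * t + f x" and "f y \<le> slope * (y - x) + f x"
    using convex_onD_Icc'[OF f, of "x + t"] convex_onD_Icc'[OF f, of y] assms
    unfolding slope_def by auto
  moreover have "slope * t + slope * (y - x) = slope * (y + t - x)"
    by (simp add: algebra_simps)
  moreover have "slope * (y + t - x) = f (y + t) - f x"
    using False unfolding slope_def by simp
  ultimately show ?thesis by linarith
qed

lemma convex_on_sum_increments_le:
  fixes f :: "real \<Rightarrow> real" and x :: "'a \<Rightarrow> real"
  assumes f: "convex_on {m..} f" and "finite A" "\<And>i. i \<in> A \<Longrightarrow> m \<le> x i" "m \<le> c"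
  shows "(\<Sum>i\<in>A. f (x i) - f m) \<le> f (c + (\<Sum>i\<in>A. x i - m)) - f c"
  using assms(2-)
proof (induction A arbitrary: c rule: finite_induct)
  case empty
  then show ?case by simp
next
  case (insert b A)
  have "m \<le> x b"
    using insert.prems(1)[of b] by simp
  have "convex_on {m..c + (x b - m)} f"
    using convex_on_subset[OF f] by simp
  then have "f (x b) - f m \<le> f (c + (x b - m)) - f c"
    using convex_on_increment_le[of m c "x b - m" f] insert.prems(2) \<open>m \<le> x b\<close> by simp
  moreover have "(\<Sum>i\<in>A. f (x i) - f m)
      \<le> f ((c + (x b - m)) + (\<Sum>i\<in>A. x i - m)) - f (c + (x b - m))"
    using insert.prems(2) \<open>m \<le> x b\<close> by (intro insert.IH insert.prems(1)) auto
  ultimately show ?case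
    using insert by (simp add: algebra_simps)
qed

lemma sum_le_powr_sum_of_dominated:
  fixes x y :: "nat \<Rightarrow> real" and a m :: real and d k :: nat
  assumes a: "1 \<le> a" "real d powr a = real k" and "1 \<le> d" "d \<le> k" "0 \<le> m"
    and low: "\<And>b. b \<in> {1..d} \<Longrightarrow> y b \<le> x b powr a" "\<And>b. b \<in> {1..d} \<Longrightarrow> m \<le> x b"
    and high: "\<And>b. b \<in> {d<..k} \<Longrightarrow> y b \<le> m powr a"
  shows "(\<Sum>b\<in>{1..k}. y b) \<le> (\<Sum>b\<in>{1..d}. x b) powr a"
proof -
  have "m \<le> real d * m"
    using \<open>1 \<le> d\<close> \<open>0 \<le> m\<close> by (simp add: mult_le_cancel_right1)
  then have "(\<Sum>b\<in>{1..d}. x b powr a - m powr a)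
      \<le> (real d * m + (\<Sum>b\<in>{1..d}. x b - m)) powr a - (real d * m) powr a"
    using convex_on_subset[OF powr_convex_nonneg[OF a(1)], of "{m..}"] low \<open>0 \<le> m\<close>
    by (intro convex_on_sum_increments_le) auto
  moreover have "(real d * m) powr a = real k * m powr a"
    using a \<open>0 \<le> m\<close> by (simp add: powr_mult)
  ultimately have convexity:
      "(\<Sum>b\<in>{1..d}. x b powr a) + real (k - d) * m powr a \<le> (\<Sum>b\<in>{1..d}. x b) powr a"
    using \<open>d \<le> k\<close> by (simp add: sum_subtractf algebra_simps)
  have "{1..k} = {1..d} \<union> {d<..k}"
    using \<open>1 \<le> d\<close> \<open>d \<le> k\<close> by auto
  then have "(\<Sum>b\<in>{1..k}. y b) = (\<Sum>b\<in>{1..d}. y b) + (\<Sum>b\<in>{d<..k}. y b)"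
    by (metis finite_atLeastAtMost finite_greaterThanAtMost ivl_disj_int_two(8) sum.union_disjoint)
  also have "\<dots> \<le> (\<Sum>b\<in>{1..d}. x b powr a) + (\<Sum>b\<in>{d<..k}. m powr a)"
    using low high by (intro add_mono sum_mono) auto
  also have "\<dots> = (\<Sum>b\<in>{1..d}. x b powr a) + real (k - d) * m powr a"
    by simp
  finally show ?thesis
    using convexity by linarith
qed

definition slice :: "('a \<Rightarrow> 'b) set \<Rightarrow> 'a set \<Rightarrow> 'a \<Rightarrow> 'b \<Rightarrow> ('a \<Rightarrow> 'b) set" where
  "slice G I p b = {h \<in> extensional I. h(p := b) \<in> G}"

lemma slice_subset_PiE:
  assumes "p \<notin> I" "G \<subseteq> PiE (insert p I) (\<lambda>_. S)"
  shows "slice G I p b \<subseteq> PiE I (\<lambda>_. S)"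
proof
  fix h
  assume h: "h \<in> slice G I p b"
  then have "h(p := b) \<in> PiE (insert p I) (\<lambda>_. S)"
    using assms(2) by (auto simp: slice_def)
  then show "h \<in> PiE I (\<lambda>_. S)"
    using h assms(1) by (auto simp: slice_def PiE_iff) metis
qed

lemma bij_betw_slices:
  assumes "p \<notin> I" "G \<subseteq> PiE (insert p I) (\<lambda>_. S)"
  shows "bij_betw (\<lambda>g. (g p, restrict g I)) G (Sigma S (slice G I p))"
proof (rule bij_betw_byWitness[where f' = "\<lambda>(b, h). h(p := b)"])
  have restore: "(restrict g I)(p := g p) = g" if "g \<in> G" for g
    using that assms by (auto simp: PiE_iff extensional_def fun_eq_iff)
  then show "\<forall>g\<in>G. (case (g p, restrict g I) of (b, h) \<Rightarrow> h(p := b)) = g"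
    by auto
  show "\<forall>bh\<in>Sigma S (slice G I p).
      ((case bh of (b, h) \<Rightarrow> h(p := b)) p, restrict (case bh of (b, h) \<Rightarrow> h(p := b)) I) = bh"
    using assms(1) by (auto simp: slice_def extensional_def restrict_def fun_eq_iff)
  show "(\<lambda>g. (g p, restrict g I)) ` G \<subseteq> Sigma S (slice G I p)"
    using restore assms by (fastforce simp: slice_def PiE_iff)
  show "(\<lambda>(b, h). h(p := b)) ` Sigma S (slice G I p) \<subseteq> G"
    by (auto simp: slice_def)
qed

lemma card_eq_sum_card_slice:
  assumes "p \<notin> I" "G \<subseteq> PiE (insert p I) (\<lambda>_. S)" "finite I" "finite S"
  shows "card G = (\<Sum>b\<in>S. card (slice G I p b))"
proof -
  have "finite (slice G I p b)" for b
    using slice_subset_PiE[OF assms(1,2)] assms(3,4) by (meson finite_PiE finite_subset)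
  then show ?thesis
    using bij_betw_same_card[OF bij_betw_slices[OF assms(1,2)]] assms(4) by simp
qed

lemma slice_Int_PiE:
  assumes "p \<notin> I" "b \<in> T"
  shows "slice (G \<inter> PiE (insert p I) (\<lambda>_. T)) I p b = slice G I p b \<inter> PiE I (\<lambda>_. T)"
  using assms by (auto simp: slice_def PiE_iff extensional_def)

definition high_letter_closed :: "nat \<Rightarrow> nat \<Rightarrow> 'a set \<Rightarrow> ('a \<Rightarrow> nat) set \<Rightarrow> bool" where
  "high_letter_closed d k I G \<longleftrightarrow> (\<forall>g\<in>G. \<forall>p\<in>I. d < g p \<longrightarrow> (\<forall>j\<in>{1..k}. g(p := j) \<in> G))"

lemma high_letter_closed_slice:
  assumes "p \<notin> I" "high_letter_closed d k (insert p I) G"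
  shows "high_letter_closed d k I (slice G I p b)"
  unfolding high_letter_closed_def
proof (intro ballI impI)
  fix h q j
  assume h: "h \<in> slice G I p b" and q: "q \<in> I" "d < h q" and j: "j \<in> {1..k}"
  have "q \<noteq> p"
    using q assms(1) by auto
  then have "(h(p := b))(q := j) \<in> G"
    using assms(2) h q j unfolding high_letter_closed_def slice_def by auto
  then show "h(q := j) \<in> slice G I p b"
    using h q \<open>q \<noteq> p\<close> by (auto simp: slice_def fun_upd_twist extensional_def)
qed

lemma slice_high_letter_subset:
  assumes "high_letter_closed d k (insert p I) G" "d < b" "c \<in> {1..k}"
  shows "slice G I p b \<subseteq> slice G I p c"
proof
  fix h
  assume "h \<in> slice G I p b"
  then have "h \<in> extensional I" "h(p := b) \<in> G"
    by (auto simp: slice_def)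
  then have "(h(p := b))(p := c) \<in> G"
    using assms unfolding high_letter_closed_def by (metis fun_upd_same insertI1)
  then show "h \<in> slice G I p c"
    using \<open>h \<in> extensional I\<close> by (simp add: slice_def)
qed

lemma card_le_card_low_letters_powr:
  fixes d k :: nat and a :: real
  assumes a: "1 \<le> a" "real d powr a = real k" and dk: "1 \<le> d" "d \<le> k"
  shows "finite I \<Longrightarrow> G \<subseteq> PiE I (\<lambda>_. {1..k}) \<Longrightarrow> high_letter_closed d k I G \<Longrightarrow>
    real (card G) \<le> real (card (G \<inter> PiE I (\<lambda>_. {1..d}))) powr a"
proof (induction I arbitrary: G rule: finite_induct)
  case empty
  then have "G \<subseteq> {\<lambda>_. undefined}" by simp
  then have "G = {} \<or> G = {\<lambda>_. undefined}" by blast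
  then show ?case by auto
next
  case (insert p I)
  let ?slice = "slice G I p"
  define x where "x b = real (card (?slice b \<inter> PiE I (\<lambda>_. {1..d})))" for b
  define m where "m = (if d < k then x (d + 1) else 0)"
    \<comment> \<open>if \<open>d = k\<close> there are no high letters and the value of \<open>m\<close> is irrelevant\<close>
  have slice_sub: "?slice b \<subseteq> PiE I (\<lambda>_. {1..k})" for b
    using slice_subset_PiE[OF insert(2,4)] .
  have fin_slice: "finite (?slice b)" for b
    using finite_subset[OF slice_sub finite_PiE] insert(1) by simp
  have slice_bound: "real (card (?slice b)) \<le> x b powr a" for b
    unfolding x_def using slice_sub high_letter_closed_slice[OF insert(2,5)]
    by (rule insert.IH)
  have "real (card G) = (\<Sum>b\<in>{1..k}. real (card (?slice b)))"
    using card_eq_sum_card_slice[OF insert(2,4,1)] by simp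
  also have "\<dots> \<le> (\<Sum>b\<in>{1..d}. x b) powr a"
  proof (rule sum_le_powr_sum_of_dominated[OF a dk])
    show "0 \<le> m"
      by (simp add: m_def x_def)
  next
    fix b assume "b \<in> {1..d}"
    then show "m \<le> x b"
      using slice_high_letter_subset[OF insert(5), of "d + 1" b] fin_slice dk
      unfolding m_def x_def by (auto intro!: card_mono)
  next
    fix b assume b: "b \<in> {d<..k}"
    then have "card (?slice b) \<le> card (?slice (d + 1))"
      using slice_high_letter_subset[OF insert(5), of b "d + 1"] fin_slice dk
      by (auto intro!: card_mono)
    then show "real (card (?slice b)) \<le> m powr a"
      using slice_bound[of "d + 1"] b unfolding m_def by auto
  qed (rule slice_bound)
  also have "(\<Sum>b\<in>{1..d}. x b) = real (card (G \<inter> PiE (insert p I) (\<lambda>_. {1..d})))"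
  proof -
    have "card (G \<inter> PiE (insert p I) (\<lambda>_. {1..d}))
        = (\<Sum>b\<in>{1..d}. card (slice (G \<inter> PiE (insert p I) (\<lambda>_. {1..d})) I p b))"
      using insert(1,2) by (intro card_eq_sum_card_slice) auto
    also have "\<dots> = (\<Sum>b\<in>{1..d}. card (?slice b \<inter> PiE I (\<lambda>_. {1..d})))"
      by (intro sum.cong refl) (simp add: slice_Int_PiE[OF insert(2)])
    finally show ?thesis
      by (simp add: x_def)
  qed
  finally show ?case .
qed

theorem lemma11:
  fixes d k n :: nat and G :: "(nat \<Rightarrow> nat) set"
  assumes "2 \<le> d" and "d \<le> k" and "1 \<le> n"
    and "G \<subseteq> words k n"
    and closed: "\<And>g p j. g \<in> G \<Longrightarrow> p < n \<Longrightarrow> g p > d \<Longrightarrow> j \<in> {1..k} \<Longrightarrow> g(p := j) \<in> G"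
  shows "(card G = 0 \<and> card (G \<inter> words d n) = 0) \<or>
         (card (G \<inter> words d n) > 0 \<and>
          log (real k) (real (card G)) \<le> log (real d) (real (card (G \<inter> words d n))))"
proof -
  define a where "a = log d k"
  have a: "1 \<le> a" "real d powr a = real k"
    using assms(1,2) unfolding a_def by auto
  have "high_letter_closed d k {..<n} G"
    unfolding high_letter_closed_def using closed by simp
  then have bound: "real (card G) \<le> real (card (G \<inter> words d n)) powr a"
    using card_le_card_low_letters_powr[OF a, of "{..<n}" G] assms(1,2,4)
    unfolding words_def by simp
  have "finite G"
    using assms(4) unfolding words_def by (rule finite_subset) (simp add: finite_PiE)
  show ?thesis
  proof (cases "G = {}")
    case False
    then have "0 < real (card G)"
      using \<open>finite G\<close> by (simp add: card_gt_0_iff)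
    then have pos: "card (G \<inter> words d n) > 0"
      using bound a(1) by (auto intro: gr0I)
    have "log k (card G) \<le> log k (real (card (G \<inter> words d n)) powr a)"
      using bound \<open>0 < real (card G)\<close> assms(1,2) by (intro log_mono) auto
    also have "\<dots> = log d (card (G \<inter> words d n))"
      using a(1) assms(1) by (simp flip: a(2) add: log_powr log_base_powr)
    finally show ?thesis
      using pos by simp
  qed simp
qed

end
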